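(* Define $\sigma:\mathbb{R}\to\mathbb{R}$ by $\sigma(x)=-1$ for $x\in(-1,0]$, $\sigma(x)=1$ for $x\in(0,1]$, and recursively, for every integer $n\ge0$, $$\sigma(x)=\sigma(x+2\cdot3^n)-\frac1{(n+1)^2}\ \text{ for }x\in(-3^{n+1},-3^n],\qquad \sigma(x)=\sigma(x-2\cdot3^n)+\frac1{(n+1)^2}\ \text{ for }x\in(3^n,3^{n+1}].$$ Then for every $x\ge1$, $$\int_0^x\sigma(t)\,dt\ \ge\ \frac{x}{2(\log_3x+1)^2}.$$ *)

theory Defs
  imports "HOL-Analysis.Analysis"
begin

text \<open>These clauses
  determine sigma uniquely on all of the reals (the intervals (-1,0], (0,1],
  (-3^(n+1),-3^n], (3^n,3^(n+1]] partition the real line, and the recursive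
  clauses refer to strictly lower levels).\<close>
definition sigma_spec :: "(real \<Rightarrow> real) \<Rightarrow> bool" where
  "sigma_spec \<sigma> \<longleftrightarrow>
     (\<forall>x. -1 < x \<and> x \<le> 0 \<longrightarrow> \<sigma> x = -1) \<and>
     (\<forall>x. 0 < x \<and> x \<le> 1 \<longrightarrow> \<sigma> x = 1) \<and>
     (\<forall>n::nat. \<forall>x. - ((3::real)^(n+1)) < x \<and> x \<le> -(3^n) \<longrightarrow>
         \<sigma> x = \<sigma> (x + 2 * 3^n) - 1 / (real n + 1)^2) \<and>
     (\<forall>n::nat. \<forall>x. (3::real)^n < x \<and> x \<le> 3^(n+1) \<longrightarrow>
         \<sigma> x = \<sigma> (x - 2 * 3^n) + 1 / (real n + 1)^2)"

end

theory Submission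
  imports Defs
begin

(* Write F(x) for the integral of sigma over [0,x].  The proof follows the paper.
   (1) sigma is odd away from the (negligible) integers, hence the integral of
       sigma over [-z,0] equals -F(z).
   (2) sigma is integrable on every compact interval: on each level [-3^n,3^n]
       it is built from the previous level by shifts and adding constants.
   (3) Splitting [0,x] at 3^n and shifting the block [3^n,x] down by 2*3^n gives,
       for 3^n <= x <= 3^(n+1), the recursion
         F(x) = F(|x - 2*3^n|) + (x - 3^n)/(n+1)^2.
   (4) By induction on n, z <= 2(n+1)^2 F(z) for 0 <= z <= 3^n: the recursion
       lifts the bound from level n to the block (3^n,3^(n+1)], and the weight
       2(n+1)^2 may be enlarged because the bound itself forces F(z) >= 0.
   The theorem follows since 3^n < x forces n < log_3 x. *)

text \<open>The integers are a null set; sigma is odd only up to this set.\<close>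
lemma negligible_Ints: "negligible (\<int> :: real set)"
proof -
  have "negligible (\<Union>x\<in>\<int>. {x::real})"
    by (rule negligible_countable_Union) (auto simp: countable_int)
  then show ?thesis by simp
qed

lemma power_block:
  fixes b x :: real
  assumes "1 < b" "1 < x"
  obtains n :: nat where "b ^ n < x" "x \<le> b ^ (n + 1)"
proof -
  obtain m where "x \<le> b ^ m"
    using real_arch_pow[OF assms(1), of x] by (auto intro: less_imp_le)
  then obtain n where "\<not> x \<le> b ^ n" "x \<le> b ^ Suc n"
    using ex_least_nat_less[of "\<lambda>m. x \<le> b ^ m" m] assms(2) by auto
  then show ?thesis using that by (simp add: not_le)
qed

lemma enlarge_weight:
  fixes z c d F :: real
  assumes "0 \<le> z" "z \<le> c * F" "0 < c" "c \<le> d"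
  shows "z \<le> d * F"
proof -
  have "0 \<le> F" using assms by (smt (verit) mult_pos_neg)
  then have "c * F \<le> d * F" using assms(4) by (rule mult_right_mono[rotated])
  then show ?thesis using assms(2) by linarith
qed

context
  fixes \<sigma> :: "real \<Rightarrow> real"
  assumes spec: "sigma_spec \<sigma>"
begin

lemma sigma_neg_unit: "-1 < x \<Longrightarrow> x \<le> 0 \<Longrightarrow> \<sigma> x = -1"
  using spec unfolding sigma_spec_def by blast

lemma sigma_pos_unit: "0 < x \<Longrightarrow> x \<le> 1 \<Longrightarrow> \<sigma> x = 1"
  using spec unfolding sigma_spec_def by blast

lemma sigma_left_block: "- ((3::real) ^ (n + 1)) < x \<Longrightarrow> x \<le> -(3 ^ n) \<Longrightarrow>
    \<sigma> x = \<sigma> (x + 2 * 3 ^ n) - 1 / (real n + 1)^2"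
  using spec unfolding sigma_spec_def by blast

lemma sigma_right_block: "(3::real) ^ n < x \<Longrightarrow> x \<le> 3 ^ (n + 1) \<Longrightarrow>
    \<sigma> x = \<sigma> (x - 2 * 3 ^ n) + 1 / (real n + 1)^2"
  using spec unfolding sigma_spec_def by blast

text \<open>By symmetry of the claim it suffices to treat t > 0; for
  t in the new block (3^n, 3^(n+1)) both t and -t are reduced by the clauses
  to the level-n point t - 2*3^n.\<close>
lemma sigma_odd_level: "\<bar>t\<bar> < (3::real) ^ n \<Longrightarrow> t \<notin> \<int> \<Longrightarrow> \<sigma> (-t) = - \<sigma> t"
proof (induction n arbitrary: t)
  case 0
  then have "t \<noteq> 0" by auto
  then show ?case using 0 sigma_neg_unit sigma_pos_unit by (cases "t > 0") auto
next
  case (Suc n)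
  have pos: "\<sigma> (-t) = - \<sigma> t" if t: "0 < t" "t < 3 ^ Suc n" "t \<notin> \<int>" for t
  proof (cases "t < 3 ^ n")
    case True
    then show ?thesis using Suc.IH t by simp
  next
    case False
    have "t \<noteq> 3 ^ n" using t(3) by (metis Ints_power Ints_numeral)
    with False t have block: "3 ^ n < t" "t < 3 ^ (n + 1)" by auto
    define s where "s = t - 2 * 3 ^ n"
    have "s \<notin> \<int>"
      using t(3) unfolding s_def by (metis Ints_add Ints_mult Ints_power Ints_numeral diff_add_cancel)
    moreover have "\<bar>s\<bar> < 3 ^ n" using block by (simp add: s_def)
    ultimately have "\<sigma> (-s) = - \<sigma> s" using Suc.IH by blast
    moreover have "\<sigma> t = \<sigma> s + 1 / (real n + 1)^2"
      using sigma_right_block[of n t] block by (simp add: s_def)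
    moreover have "\<sigma> (-t) = \<sigma> (-s) - 1 / (real n + 1)^2"
      using sigma_left_block[of n "-t"] block by (simp add: s_def)
    ultimately show ?thesis by simp
  qed
  show ?case
  proof (cases "t > 0")
    case True
    then show ?thesis using pos Suc.prems by simp
  next
    case False
    with Suc.prems have "t \<noteq> 0" by auto
    with False have "\<sigma> t = - \<sigma> (-t)"
      using pos[of "-t"] Suc.prems by (simp add: minus_in_Ints_iff)
    then show ?thesis by simp
  qed
qed

lemma sigma_odd: "t \<notin> \<int> \<Longrightarrow> \<sigma> (-t) = - \<sigma> t"
  using real_arch_pow[of 3 "\<bar>t\<bar>"] sigma_odd_level by force

text \<open>Integrability on the symmetric levels [-3^n, 3^n]: on each new block sigma
  agrees, up to an endpoint, with a shifted copy of the previous level plus a constant.\<close>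
lemma sigma_integrable_level: "\<sigma> integrable_on {-(3 ^ n) .. (3::real) ^ n}"
proof (induction n)
  case 0
  have "\<sigma> integrable_on {-1..0}"
    by (rule integrable_spike_finite[where S="{-1}" and f="\<lambda>_. -1"])
       (auto simp: sigma_neg_unit)
  moreover have "\<sigma> integrable_on {0..1}"
    by (rule integrable_spike_finite[where S="{0}" and f="\<lambda>_. 1"])
       (auto simp: sigma_pos_unit)
  ultimately show ?case using Henstock_Kurzweil_Integration.integrable_combine[of "-1" 0 1 \<sigma>] by simp
next
  case (Suc n)
  define a :: real where "a = 3 ^ n"
  have a: "0 < a" "(3::real) ^ Suc n = 3 * a" by (simp_all add: a_def)
  have IH: "\<sigma> integrable_on {-a..a}" using Suc.IH by (simp add: a_def)
  have "(\<lambda>t. \<sigma> (t + 2 * a)) integrable_on {-(3 * a)..-a}"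
    using integrable_shift_real_ivl[OF IH, of "2 * a"] by simp
  then have "(\<lambda>t. \<sigma> (t + 2 * a) - 1 / (real n + 1)^2) integrable_on {-(3 * a)..-a}"
    by (rule integrable_diff[OF _ integrable_const_ivl])
  then have left: "\<sigma> integrable_on {-(3 * a)..-a}"
    by (rule integrable_spike_finite[where S="{-(3 * a)}", rotated 2])
       (use sigma_left_block[of n] a in \<open>auto simp: a_def\<close>)
  have "(\<lambda>t. \<sigma> (t - 2 * a)) integrable_on {a..3 * a}"
    using integrable_shift_real_ivl[OF IH, of "- 2 * a"] by simp
  then have "(\<lambda>t. \<sigma> (t - 2 * a) + 1 / (real n + 1)^2) integrable_on {a..3 * a}"
    by (rule integrable_add[OF _ integrable_const_ivl])
  then have right: "\<sigma> integrable_on {a..3 * a}"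
    by (rule integrable_spike_finite[where S="{a}", rotated 2])
       (use sigma_right_block[of n] a in \<open>auto simp: a_def\<close>)
  have "\<sigma> integrable_on {-(3 * a)..a}"
    using Henstock_Kurzweil_Integration.integrable_combine[OF _ _ left IH] a by simp
  then show ?case
    using Henstock_Kurzweil_Integration.integrable_combine[OF _ _ _ right] a by simp
qed

lemma sigma_integrable: "\<sigma> integrable_on {a..b::real}"
proof -
  obtain n where "max \<bar>a\<bar> \<bar>b\<bar> < (3::real) ^ n"
    using real_arch_pow[of 3 "max \<bar>a\<bar> \<bar>b\<bar>"] by auto
  then show ?thesis
    by (intro integrable_subinterval_real[OF sigma_integrable_level[of n]]) auto
qed

lemma integral_unit: "0 \<le> z \<Longrightarrow> z \<le> 1 \<Longrightarrow> integral {0..z} \<sigma> = z"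
proof -
  assume z: "0 \<le> z" "z \<le> 1"
  have "integral {0..z} \<sigma> = integral {0..z} (\<lambda>_. 1::real)"
    by (rule integral_spike[where S="{0}"]) (use z in \<open>auto simp: sigma_pos_unit\<close>)
  then show ?thesis using z by simp
qed

lemma integral_neg_side: "integral {-z..0} \<sigma> = - integral {0..z} \<sigma>"
proof -
  have "integral {-z..0} \<sigma> = integral {0..z} (\<lambda>t. \<sigma> (-t))"
    using Henstock_Kurzweil_Integration.integral_reflect_real[of 0 "-z" \<sigma>] by simp
  also have "\<dots> = integral {0..z} (\<lambda>t. - \<sigma> t)"
    by (rule integral_spike[where S="\<int>"]) (auto simp: negligible_Ints sigma_odd)
  finally show ?thesis by (simp add: integral_neg)
qed

lemma integral_from_neg:
  assumes "0 \<le> a" "-a \<le> y"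
  shows "integral {-a..y} \<sigma> = integral {0..\<bar>y\<bar>} \<sigma> - integral {0..a} \<sigma>"
proof (cases "0 \<le> y")
  case True
  then have "integral {-a..y} \<sigma> = integral {-a..0} \<sigma> + integral {0..y} \<sigma>"
    using Henstock_Kurzweil_Integration.integral_combine[of "-a" 0 y \<sigma>] sigma_integrable assms by simp
  then show ?thesis using True integral_neg_side by simp
next
  case False
  then have "integral {-a..0} \<sigma> = integral {-a..y} \<sigma> + integral {y..0} \<sigma>"
    using Henstock_Kurzweil_Integration.integral_combine[of "-a" y 0 \<sigma>] sigma_integrable assms by simp
  then show ?thesis using False integral_neg_side[of a] integral_neg_side[of "-y"] by simp
qed

lemma integral_right_block:
  assumes "(3::real) ^ n \<le> x" "x \<le> 3 ^ (n + 1)"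
  shows "integral {3 ^ n..x} \<sigma> = integral {-(3 ^ n)..x - 2 * 3 ^ n} \<sigma> + (x - 3 ^ n) / (real n + 1)^2"
proof -
  define a :: real where "a = 3 ^ n"
  define c :: real where "c = 1 / (real n + 1)^2"
  have "integral {a..x} \<sigma> = integral {a..x} (\<lambda>t. \<sigma> (t - 2 * a) + c)"
  proof (rule integral_spike[where S="{a}"])
    fix t assume "t \<in> {a..x} - {a}"
    then show "\<sigma> (t - 2 * a) + c = \<sigma> t"
      using sigma_right_block[of n t] assms by (simp add: a_def c_def)
  qed simp
  also have "\<dots> = integral {a..x} (\<lambda>t. \<sigma> (t - 2 * a)) + c * (x - a)"
    using integrable_shift_real_ivl[OF sigma_integrable, of "- 2 * a" "-a" "x - 2 * a"] assms
    by (subst integral_add) (auto simp: a_def)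
  also have "integral {a..x} (\<lambda>t. \<sigma> (t - 2 * a)) = integral {-a..x - 2 * a} \<sigma>"
    using integral_shift_real_ivl[of "-a" "- 2 * a" "x - 2 * a" \<sigma>] by simp
  finally show ?thesis by (simp add: a_def c_def)
qed

lemma integral_recursion:
  assumes "(3::real) ^ n \<le> x" "x \<le> 3 ^ (n + 1)"
  shows "integral {0..x} \<sigma> = integral {0..\<bar>x - 2 * 3 ^ n\<bar>} \<sigma> + (x - 3 ^ n) / (real n + 1)^2"
proof -
  have "integral {0..x} \<sigma> = integral {0..3 ^ n} \<sigma> + integral {3 ^ n..x} \<sigma>"
    using Henstock_Kurzweil_Integration.integral_combine[of 0 "3 ^ n" x \<sigma>] sigma_integrable assms by simp
  moreover have "integral {-(3 ^ n)..x - 2 * 3 ^ n} \<sigma>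
      = integral {0..\<bar>x - 2 * 3 ^ n\<bar>} \<sigma> - integral {0..3 ^ n} \<sigma>"
    using integral_from_neg[of "3 ^ n" "x - 2 * 3 ^ n"] assms by simp
  ultimately show ?thesis using integral_right_block[OF assms] by simp
qed

text \<open>Inductive step: the bound at level n propagates to the block (3^n, 3^(n+1)].
  With y = \<bar>x - 2*3^n\<bar> \<ge> 2*3^n - x the recursion gives
  2(n+1)^2 F(x) \<ge> y + 2(x - 3^n) \<ge> x.\<close>
lemma bound_next_block:
  assumes level: "\<And>z. 0 \<le> z \<Longrightarrow> z \<le> (3::real) ^ n \<Longrightarrow> z \<le> 2 * (real n + 1)^2 * integral {0..z} \<sigma>"
    and x: "(3::real) ^ n < x" "x \<le> 3 ^ (n + 1)"
  shows "x \<le> 2 * (real n + 1)^2 * integral {0..x} \<sigma>"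
proof -
  define k :: real where "k = (real n + 1)^2"
  define y where "y = \<bar>x - 2 * 3 ^ n\<bar>"
  have y: "0 \<le> y" "y \<le> 3 ^ n" "2 * 3 ^ n - x \<le> y" using x by (auto simp: y_def)
  have "y \<le> 2 * k * integral {0..y} \<sigma>" using level[OF y(1,2)] by (simp add: k_def)
  moreover have "2 * k * integral {0..x} \<sigma> = 2 * k * integral {0..y} \<sigma> + 2 * (x - 3 ^ n)"
    using integral_recursion[of n x] x by (simp add: y_def k_def field_simps)
  ultimately show ?thesis using y by (simp add: k_def)
qed

lemma bound_level: "0 \<le> z \<Longrightarrow> z \<le> (3::real) ^ n \<Longrightarrow> z \<le> 2 * (real n + 1)^2 * integral {0..z} \<sigma>"
proof (induction n arbitrary: z)
  case 0
  then show ?case using integral_unit[of z] by simp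
next
  case (Suc n)
  have "z \<le> 2 * (real n + 1)^2 * integral {0..z} \<sigma>"
  proof (cases "z \<le> 3 ^ n")
    case True
    then show ?thesis using Suc by blast
  next
    case False
    then show ?thesis using bound_next_block[OF Suc.IH, of z] Suc.prems by simp
  qed
  then show ?case
    by (rule enlarge_weight[OF Suc.prems(1)]) (auto intro: power_mono)
qed

end

theorem mainTheorem5:
  fixes \<sigma> :: "real \<Rightarrow> real" and x :: real
  assumes "sigma_spec \<sigma>"
    and "x \<ge> 1"
  shows "integral {0..x} \<sigma> \<ge> x / (2 * (log 3 x + 1)^2)"
proof (cases "x = 1")
  case True
  then show ?thesis using integral_unit[OF assms(1), of 1] by simp
next
  case False
  with assms(2) have "1 < x" by simp
  then obtain n where block: "3 ^ n < x" "x \<le> (3::real) ^ (n + 1)"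
    using power_block[of 3 x] by auto
  have bound: "x \<le> 2 * (real n + 1)^2 * integral {0..x} \<sigma>"
    using bound_next_block[OF assms(1) bound_level[OF assms(1)] block] .
  have "real n < log 3 x"
    using block(1) \<open>1 < x\<close> by (subst less_log_iff) (auto simp: powr_realpow)
  then have "2 * (real n + 1)^2 \<le> 2 * (log 3 x + 1)^2" by (simp add: power_mono)
  then have "x / (2 * (log 3 x + 1)^2) \<le> x / (2 * (real n + 1)^2)"
    using \<open>1 < x\<close> by (intro divide_left_mono) auto
  also have "\<dots> \<le> integral {0..x} \<sigma>"
    using bound by (simp add: divide_le_eq mult.commute)
  finally show ?thesis .
qed

end
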